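(* Let $\mathfrak{H}$ be a fat indecomposable Hoffman graph with $\lambda_{\min}(\mathfrak{H})\ge-1-\tau$, where $\tau=\frac{1+\sqrt5}{2}$. If some slim vertex of $\mathfrak{H}$ has at least two fat neighbours, then $\mathcal{S}(\mathfrak{H})$ is isomorphic to $\mathcal{Q}_{0,0,1}$ (a single vertex), $\mathcal{Q}_{1,0,1}$ (two vertices joined by a $(+)$-edge), or $\mathcal{Q}_{0,1,1}$ (two vertices joined by a $(-)$-edge); in particular $\mathfrak{H}$ has at most two slim vertices.
   Context: A Hoffman graph $\mathfrak{H}$ is a finite simple graph $H$ together with a labeling of each vertex as slim or fat, such that every fat vertex is adjacent to at least one slim vertex and the fat vertices are pairwise non-adjacent. $V^s(\mathfrak{H})$ denotes the set of slim vertices and $N^f_{\mathfrak{H}}(x)$ the set of fat neighbours of $x$. $\mathfrak{H}$ is fat if every slim vertex has a fat neighbour. An induced Hoffman subgraph is a Hoffman graph whose underlying graph is an induced subgraph with inherited labels. Writing the adjacency matrix of $H$ with fat vertices last as $\begin{pmatrix}A_s & C\\ C^T & O\end{pmatrix}$, set $B(\mathfrak{H})=A_s-CC^T$; $\lambda_{\min}(\mathfrak{H})$ is its smallest eigenvalue. A decomposition of $\mathfrak{H}$ is a family $\{\mathfrak{H}^i\}_{i=1}^n$ of induced Hoffman subgraphs such that: (i) $V(\mathfrak{H})=\bigcup_i V(\mathfrak{H}^i)$; (ii) slim vertex sets of distinct members are disjoint; (iii) if $x\in V^s(\mathfrak{H}^i)$ and $y$ is a fat neighbour of $x$ in $\mathfrak{H}$,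 then $y\in V(\mathfrak{H}^i)$; (iv) if $x\in V^s(\mathfrak{H}^i)$, $y\in V^s(\mathfrak{H}^j)$, $i\neq j$, then $|N^f_{\mathfrak{H}}(x)\cap N^f_{\mathfrak{H}}(y)|\le 1$, with equality iff $x,y$ are adjacent. $\mathfrak{H}$ is indecomposable if it has no decomposition with $n\ge2$. The special graph $\mathcal{S}(\mathfrak{H})$ is the edge-signed graph (edges labelled $+$ or $-$) with vertex set $V^s(\mathfrak{H})$ in which distinct $u,v$ are joined by a $(+)$-edge iff they are adjacent in $\mathfrak{H}$ and have no common fat neighbour, by a $(-)$-edge iff they are non-adjacent in $\mathfrak{H}$ and have a common fat neighbour, and are not joined otherwise; isomorphisms of edge-signed graphs preserve signs. *)

theory Defs
  imports Complex_Main
begin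

text \<open>A Hoffman graph on vertex set V (of type 'a) with slim vertex set S
  (fat vertices are V - S) and adjacency relation E.\<close>

definition hoffman_graph :: "'a set \<Rightarrow> 'a set \<Rightarrow> ('a \<Rightarrow> 'a \<Rightarrow> bool) \<Rightarrow> bool" where
  "hoffman_graph V S E \<longleftrightarrow>
     finite V \<and> S \<subseteq> V \<and>
     (\<forall>u v. E u v \<longrightarrow> u \<in> V \<and> v \<in> V) \<and>
     (\<forall>u v. E u v \<longrightarrow> E v u) \<and>
     (\<forall>u. \<not> E u u) \<and>
     (\<forall>y\<in>V - S. \<exists>x\<in>S. E x y) \<and>
     (\<forall>y\<in>V - S. \<forall>z\<in>V - S. \<not> E y z)"

definition fat_nbrs :: "'a set \<Rightarrow> 'a set \<Rightarrow> ('a \<Rightarrow> 'a \<Rightarrow> bool) \<Rightarrow> 'a \<Rightarrow> 'a set" where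
  "fat_nbrs V S E x = {y \<in> V - S. E x y}"

definition fat_hoffman :: "'a set \<Rightarrow> 'a set \<Rightarrow> ('a \<Rightarrow> 'a \<Rightarrow> bool) \<Rightarrow> bool" where
  "fat_hoffman V S E \<longleftrightarrow> (\<forall>x\<in>S. fat_nbrs V S E x \<noteq> {})"

definition induced_hoffman_subgraph ::
  "'a set \<Rightarrow> 'a set \<Rightarrow> ('a \<Rightarrow> 'a \<Rightarrow> bool) \<Rightarrow> 'a set \<Rightarrow> bool" where
  "induced_hoffman_subgraph V S E W \<longleftrightarrow>
     W \<subseteq> V \<and> hoffman_graph W (S \<inter> W) (\<lambda>u v. E u v \<and> u \<in> W \<and> v \<in> W)"

definition decomposition ::
  "'a set \<Rightarrow> 'a set \<Rightarrow> ('a \<Rightarrow> 'a \<Rightarrow> bool) \<Rightarrow> nat \<Rightarrow> (nat \<Rightarrow> 'a set) \<Rightarrow> bool" where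
  "decomposition V S E n Hs \<longleftrightarrow>
     (\<forall>i<n. Hs i \<noteq> {} \<and> induced_hoffman_subgraph V S E (Hs i)) \<and>
     V = (\<Union>i<n. Hs i) \<and>
     (\<forall>i<n. \<forall>j<n. i \<noteq> j \<longrightarrow> (S \<inter> Hs i) \<inter> (S \<inter> Hs j) = {}) \<and>
     (\<forall>i<n. \<forall>x\<in>S \<inter> Hs i. fat_nbrs V S E x \<subseteq> Hs i) \<and>
     (\<forall>i<n. \<forall>j<n. i \<noteq> j \<longrightarrow> (\<forall>x\<in>S \<inter> Hs i. \<forall>y\<in>S \<inter> Hs j.
        card (fat_nbrs V S E x \<inter> fat_nbrs V S E y) \<le> 1 \<and>
        (card (fat_nbrs V S E x \<inter> fat_nbrs V S E y) = 1 \<longleftrightarrow> E x y)))"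

definition indecomposable :: "'a set \<Rightarrow> 'a set \<Rightarrow> ('a \<Rightarrow> 'a \<Rightarrow> bool) \<Rightarrow> bool" where
  "indecomposable V S E \<longleftrightarrow> \<not> (\<exists>n Hs. n \<ge> 2 \<and> decomposition V S E n Hs)"

text \<open>The matrix B = A_s - C C^T, indexed by slim vertices.\<close>
definition Bmat :: "'a set \<Rightarrow> 'a set \<Rightarrow> ('a \<Rightarrow> 'a \<Rightarrow> bool) \<Rightarrow> 'a \<Rightarrow> 'a \<Rightarrow> real" where
  "Bmat V S E u v = (if E u v then 1 else 0) - real (card (fat_nbrs V S E u \<inter> fat_nbrs V S E v))"

definition B_eigenvalues :: "'a set \<Rightarrow> 'a set \<Rightarrow> ('a \<Rightarrow> 'a \<Rightarrow> bool) \<Rightarrow> real set" where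
  "B_eigenvalues V S E = {lam. \<exists>x :: 'a \<Rightarrow> real. (\<exists>u\<in>S. x u \<noteq> 0) \<and>
      (\<forall>u\<in>S. (\<Sum>v\<in>S. Bmat V S E u v * x v) = lam * x u)}"

definition lambda_min :: "'a set \<Rightarrow> 'a set \<Rightarrow> ('a \<Rightarrow> 'a \<Rightarrow> bool) \<Rightarrow> real" where
  "lambda_min V S E = Min (B_eigenvalues V S E)"

datatype sign = Plus | Minus

definition special_label :: "'a set \<Rightarrow> 'a set \<Rightarrow> ('a \<Rightarrow> 'a \<Rightarrow> bool) \<Rightarrow> 'a \<Rightarrow> 'a \<Rightarrow> sign option" where
  "special_label V S E u v =
     (if u = v then None
      else if E u v \<and> fat_nbrs V S E u \<inter> fat_nbrs V S E v = {} then Some Plus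
      else if \<not> E u v \<and> fat_nbrs V S E u \<inter> fat_nbrs V S E v \<noteq> {} then Some Minus
      else None)"

definition signed_iso :: "'a set \<Rightarrow> ('a \<Rightarrow> 'a \<Rightarrow> sign option) \<Rightarrow> 'b set \<Rightarrow> ('b \<Rightarrow> 'b \<Rightarrow> sign option) \<Rightarrow> bool" where
  "signed_iso A l B m \<longleftrightarrow> (\<exists>f. bij_betw f A B \<and> (\<forall>u\<in>A. \<forall>v\<in>A. l u v = m (f u) (f v)))"

definition Q001_V :: "nat set" where "Q001_V = {0}"
definition Q001_l :: "nat \<Rightarrow> nat \<Rightarrow> sign option" where "Q001_l u v = None"
definition Q101_V :: "nat set" where "Q101_V = {0, 1}"
definition Q101_l :: "nat \<Rightarrow> nat \<Rightarrow> sign option" where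
  "Q101_l u v = (if u \<noteq> v then Some Plus else None)"
definition Q011_V :: "nat set" where "Q011_V = {0, 1}"
definition Q011_l :: "nat \<Rightarrow> nat \<Rightarrow> sign option" where
  "Q011_l u v = (if u \<noteq> v then Some Minus else None)"

end

theory Submission
  imports Defs "HOL-Analysis.Function_Topology" "Jordan_Normal_Form.Char_Poly"
begin

(* Write B = A_s - C C^T for the matrix of the Hoffman graph and tau for the golden ratio.
   1. Linear algebra (Rayleigh principle): for a real symmetric matrix indexed by a finite
      nonempty set, the smallest eigenvalue m satisfies m * |z|^2 <= z^T B z for every z.  Hence lambda_min >= -1 - tau yields c * |z|^2 <= z^T B z with c > -8/3.
   2. Decompositions: a partition of the slim vertices into two nonempty parts K, S - K which
      satisfies the cross condition (iv) of a decomposition yields a decomposition into the two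
      induced subgraphs spanned by K resp. S - K and their fat neighbours.
   3. Combinatorics (locale fat_hoffman_bounded): testing the bound with vectors supported on one,
      two or three slim vertices shows that every slim vertex has one or two fat neighbours, that
      entries of B off the diagonal lie in {-1,0,1}, and that a slim vertex x with two fat
      neighbours has at most one B-neighbour y, which in turn has no B-neighbour besides x.
      Then {x} or {x,y} is closed under B-adjacency, so indecomposability (via 2.) forces it to
      be all of S, and the special graph is read off from the entry B x y. *)

section \<open>Quadratic forms and the Rayleigh principle\<close>

text \<open>Vectors are real functions on the index type; only their values on the index set S matter.\<close>

definition quad_form :: "'a set \<Rightarrow> ('a \<Rightarrow> 'a \<Rightarrow> real) \<Rightarrow> ('a \<Rightarrow> real) \<Rightarrow> real" where
  "quad_form S M z = (\<Sum>u\<in>S. \<Sum>v\<in>S. z u * M u v * z v)"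

definition sq_norm :: "'a set \<Rightarrow> ('a \<Rightarrow> real) \<Rightarrow> real" where
  "sq_norm S z = (\<Sum>u\<in>S. (z u)^2)"

definition eigenvalues_on :: "'a set \<Rightarrow> ('a \<Rightarrow> 'a \<Rightarrow> real) \<Rightarrow> real set" where
  "eigenvalues_on S M =
     {lam. \<exists>x. (\<exists>u\<in>S. x u \<noteq> 0) \<and> (\<forall>u\<in>S. (\<Sum>v\<in>S. M u v * x v) = lam * x u)}"

text \<open>Every eigenvalue is a root of the characteristic polynomial of the matrix obtained by
  enumerating S, so there are only finitely many; this makes their minimum meaningful.\<close>
lemma eigenvalues_on_finite:
  assumes fin: "finite S"
  shows "finite (eigenvalues_on S M)"
proof -
  obtain g where g: "bij_betw g {0..<card S} S" using ex_bij_betw_nat_finite[OF fin] by blast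
  define n where "n = card S"
  define A where "A = mat n n (\<lambda>(i,j). M (g i) (g j))"
  have A: "A \<in> carrier_mat n n" unfolding A_def by simp
  have "eigenvalues_on S M \<subseteq> {k. poly (char_poly A) k = 0}"
  proof
    fix lam assume "lam \<in> eigenvalues_on S M"
    then obtain x u where u: "u \<in> S" "x u \<noteq> 0"
      and ev: "\<forall>u\<in>S. (\<Sum>v\<in>S. M u v * x v) = lam * x u"
      unfolding eigenvalues_on_def by auto
    define v where "v = vec n (\<lambda>i. x (g i))"
    obtain i where i: "i < n" "g i = u"
      using g u unfolding n_def bij_betw_def by (metis atLeastLessThan_iff imageE)
    have "v $ i \<noteq> 0" using i u unfolding v_def by simp
    then have "v \<noteq> 0\<^sub>v n" using i by auto
    moreover have "A *\<^sub>v v = lam \<cdot>\<^sub>v v"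
    proof (rule eq_vecI)
      fix j assume "j < dim_vec (lam \<cdot>\<^sub>v v)"
      then have j: "j < n" unfolding v_def by simp
      have gj: "g j \<in> S" using g j unfolding n_def bij_betw_def by auto
      have "(A *\<^sub>v v) $ j = (\<Sum>k\<in>{0..<n}. M (g j) (g k) * x (g k))"
        using j unfolding A_def v_def by (simp add: scalar_prod_def)
      also have "\<dots> = (\<Sum>w\<in>S. M (g j) w * x w)"
        using sum.reindex_bij_betw[OF g, of "\<lambda>w. M (g j) w * x w"] unfolding n_def by simp
      also have "\<dots> = lam * x (g j)" using ev gj by simp
      finally show "(A *\<^sub>v v) $ j = (lam \<cdot>\<^sub>v v) $ j" using j unfolding v_def by simp
    qed (simp add: A_def v_def)
    moreover have "v \<in> carrier_vec n" unfolding v_def by simp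
    ultimately have "eigenvalue A lam" unfolding eigenvalue_def eigenvector_def using A by blast
    then show "lam \<in> {k. poly (char_poly A) k = 0}" using eigenvalue_root_char_poly[OF A] by simp
  qed
  moreover have "char_poly A \<noteq> 0" using degree_monic_char_poly[OF A] by auto
  then have "finite {k. poly (char_poly A) k = 0}" by (rule poly_roots_finite)
  ultimately show ?thesis by (rule finite_subset)
qed

text \<open>By compactness the quadratic form attains its minimum on the unit sphere. Only the
  coordinates in S matter, so the sphere may be intersected with a compact box.\<close>
lemma sphere_minimizer:
  assumes fin: "finite S" and ne: "S \<noteq> {}"
  obtains z0 where "sq_norm S z0 = 1"
    and "\<And>y. sq_norm S y = 1 \<Longrightarrow> quad_form S M z0 \<le> quad_form S M y"
proof -
  define X where "X = (\<lambda>u. if u \<in> S then {-1..1::real} else {0})"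
  define T where "T = Pi\<^sub>E UNIV X \<inter> {z. sq_norm S z = 1}"
  have cq: "continuous_on UNIV (quad_form S M)" unfolding quad_form_def
    by (intro continuous_intros continuous_on_product_coordinates)
  have cn: "continuous_on UNIV (sq_norm S)" unfolding sq_norm_def
    by (intro continuous_intros continuous_on_product_coordinates)
  have "compactin (product_topology (\<lambda>i. euclidean) UNIV) (Pi\<^sub>E UNIV X)"
    unfolding compactin_PiE X_def by auto
  then have "compact (Pi\<^sub>E UNIV X)" unfolding euclidean_product_topology by simp
  moreover have "closed {z. sq_norm S z = 1}"
    using closed_Collect_eq[OF cn continuous_on_const] by simp
  ultimately have cT: "compact T" unfolding T_def by auto
  obtain s where s: "s \<in> S" using ne by auto
  have "(\<lambda>u. if u = s then 1 else 0) \<in> T" unfolding T_def X_def sq_norm_def using s fin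
    by (auto simp: PiE_iff if_distrib[of "\<lambda>x. x^2"] cong: if_cong)
  then have "T \<noteq> {}" by auto
  then obtain z0 where z0: "z0 \<in> T"
    and zmin: "\<And>y. y \<in> T \<Longrightarrow> quad_form S M z0 \<le> quad_form S M y"
    using continuous_attains_inf[OF cT _ continuous_on_subset[OF cq]] by blast
  have "quad_form S M z0 \<le> quad_form S M y" if y: "sq_norm S y = 1" for y
  proof -
    define y' where "y' = (\<lambda>u. if u \<in> S then y u else 0)"
    have q: "quad_form S M y' = quad_form S M y" and n: "sq_norm S y' = 1"
      using y unfolding quad_form_def sq_norm_def y'_def by (auto intro!: sum.cong)
    have "\<bar>y u\<bar> \<le> 1" if "u \<in> S" for u
    proof -
      have "(y u)^2 \<le> sq_norm S y"
        unfolding sq_norm_def using member_le_sum[of u S "\<lambda>u. (y u)^2"] that fin by simp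
      then show ?thesis using y by (simp add: abs_square_le_1)
    qed
    then have "y' \<in> T" using n unfolding T_def X_def y'_def by (auto simp: PiE_iff abs_le_iff)
    then show ?thesis using zmin q by fastforce
  qed
  then show ?thesis using that z0 unfolding T_def by blast
qed

text \<open>By homogeneity, the minimum on the unit sphere bounds the form everywhere.\<close>
lemma sphere_min_bound:
  assumes fin: "finite S"
    and min: "\<And>y. sq_norm S y = 1 \<Longrightarrow> m \<le> quad_form S M y"
  shows "m * sq_norm S w \<le> quad_form S M w"
proof (cases "sq_norm S w = 0")
  case True
  then have "\<forall>u\<in>S. w u = 0" using fin unfolding sq_norm_def by (simp add: sum_nonneg_eq_0_iff)
  then have "quad_form S M w = 0" unfolding quad_form_def by simp
  then show ?thesis using True by simp
next
  case False
  then have pos: "sq_norm S w > 0"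
    unfolding sq_norm_def by (simp add: order.not_eq_order_implies_strict sum_nonneg)
  define r where "r = sqrt (sq_norm S w)"
  have r: "r > 0" "r^2 = sq_norm S w" using pos unfolding r_def by auto
  have "sq_norm S (\<lambda>u. w u / r) = sq_norm S w / r^2"
    unfolding sq_norm_def by (simp add: power_divide sum_divide_distrib)
  then have "m \<le> quad_form S M (\<lambda>u. w u / r)" using min r pos by simp
  also have "\<dots> = quad_form S M w / r^2"
    unfolding quad_form_def by (simp add: sum_divide_distrib power2_eq_square)
  finally show ?thesis using r pos by (simp add: pos_le_divide_eq)
qed

lemma quad_form_perturb:
  assumes fin: "finite S" and u0: "u0 \<in> S" and sym: "\<And>u v. u \<in> S \<Longrightarrow> v \<in> S \<Longrightarrow> M u v = M v u"
    and e: "e = (\<lambda>u. if u = u0 then 1 else 0 :: real)"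
  shows "quad_form S M (\<lambda>u. z u + t * e u) =
           quad_form S M z + 2 * t * (\<Sum>v\<in>S. M u0 v * z v) + t^2 * M u0 u0"
    and "sq_norm S (\<lambda>u. z u + t * e u) = sq_norm S z + 2 * t * z u0 + t^2"
proof -
  have expand: "(\<Sum>u\<in>S. \<Sum>v\<in>S. (z u + t * e u) * M u v * (z v + t * e v)) =
      (\<Sum>u\<in>S. \<Sum>v\<in>S. z u * M u v * z v)
      + t * ((\<Sum>u\<in>S. \<Sum>v\<in>S. z u * M u v * e v) + (\<Sum>u\<in>S. \<Sum>v\<in>S. e u * M u v * z v))
      + t^2 * (\<Sum>u\<in>S. \<Sum>v\<in>S. e u * M u v * e v)"
    by (simp add: algebra_simps sum.distrib sum_distrib_left power2_eq_square)
  have row: "(\<Sum>u\<in>S. \<Sum>v\<in>S. e u * M u v * f v) = (\<Sum>v\<in>S. M u0 v * f v)" for f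
  proof -
    have "(\<Sum>u\<in>S. \<Sum>v\<in>S. e u * M u v * f v) = (\<Sum>u\<in>S. e u * (\<Sum>v\<in>S. M u v * f v))"
      by (simp add: sum_distrib_left mult.assoc)
    also have "\<dots> = (\<Sum>v\<in>S. M u0 v * f v)"
      using fin u0 unfolding e by (simp add: if_distrib[of "\<lambda>x. x * _"] cong: if_cong)
    finally show ?thesis .
  qed
  have "(\<Sum>u\<in>S. \<Sum>v\<in>S. z u * M u v * e v) = (\<Sum>u\<in>S. \<Sum>v\<in>S. e u * M u v * z v)"
    by (subst sum.swap) (auto intro!: sum.cong simp: sym)
  moreover have "(\<Sum>v\<in>S. M u0 v * e v) = M u0 u0"
    using fin u0 unfolding e by (simp add: if_distrib[of "\<lambda>x. _ * x"] cong: if_cong)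
  ultimately show "quad_form S M (\<lambda>u. z u + t * e u) =
           quad_form S M z + 2 * t * (\<Sum>v\<in>S. M u0 v * z v) + t^2 * M u0 u0"
    unfolding quad_form_def expand row by simp
  show "sq_norm S (\<lambda>u. z u + t * e u) = sq_norm S z + 2 * t * z u0 + t^2"
    using u0 fin unfolding sq_norm_def e
    by (simp add: power2_eq_square algebra_simps sum.distrib sum_distrib_left
        if_distrib[of "\<lambda>x. _ * x"] cong: if_cong)
qed

lemma nonneg_quadratic_linear_coeff:
  fixes a b :: real
  assumes nonneg: "\<And>t. 0 \<le> 2 * t * a + t^2 * b" and "b \<ge> 0"
  shows "a = 0"
proof (rule ccontr)
  assume "a \<noteq> 0"
  define s where "s = 1 / (b + 1)"
  have s: "s > 0" "s * b < 1" unfolding s_def using \<open>b \<ge> 0\<close> by (auto simp: field_simps)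
  have "2 * (-a * s) * a + (-a * s)^2 * b = a^2 * (s * (s * b - 2))"
    by (simp add: algebra_simps power2_eq_square)
  also have "\<dots> < 0" using \<open>a \<noteq> 0\<close> s by (intro mult_pos_neg) auto
  finally show False using nonneg[of "-a * s"] by linarith
qed

text \<open>If z^T M z >= m |z|^2 for all z (M symmetric), then every z0 attaining equality is an
  eigenvector for m: the perturbation z0 + t e_u0 forces the u0-th entry of (M - m) z0 to vanish.\<close>
lemma equality_vector_is_eigenvector:
  assumes fin: "finite S" and sym: "\<And>u v. u \<in> S \<Longrightarrow> v \<in> S \<Longrightarrow> M u v = M v u"
    and bound: "\<And>w. m * sq_norm S w \<le> quad_form S M w"
    and eq: "quad_form S M z0 = m * sq_norm S z0" and u0: "u0 \<in> S"
  shows "(\<Sum>v\<in>S. M u0 v * z0 v) = m * z0 u0"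
proof -
  define e where "e = (\<lambda>u. if u = u0 then 1 else 0 :: real)"
  note perturb = quad_form_perturb[OF fin u0 sym e_def]
  have "0 \<le> 2 * t * ((\<Sum>v\<in>S. M u0 v * z0 v) - m * z0 u0) + t^2 * (M u0 u0 - m)" for t
  proof -
    have "m * sq_norm S (\<lambda>u. z0 u + t * e u) \<le> quad_form S M (\<lambda>u. z0 u + t * e u)"
      by (rule bound)
    then have "m * (sq_norm S z0 + 2 * t * z0 u0 + t^2) \<le>
        quad_form S M z0 + 2 * t * (\<Sum>v\<in>S. M u0 v * z0 v) + t^2 * M u0 u0"
      by (simp only: perturb)
    then show ?thesis using eq by (simp add: algebra_simps)
  qed
  moreover have "M u0 u0 - m \<ge> 0"
  proof -
    have "m * sq_norm S (\<lambda>u. 0 + 1 * e u) \<le> quad_form S M (\<lambda>u. 0 + 1 * e u)" by (rule bound)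
    then have "m * (sq_norm S (\<lambda>_. 0) + 2 * 1 * 0 + 1^2) \<le>
        quad_form S M (\<lambda>_. 0) + 2 * 1 * (\<Sum>v\<in>S. M u0 v * 0) + 1^2 * M u0 u0"
      by (simp only: perturb)
    then show ?thesis by (simp add: quad_form_def sq_norm_def)
  qed
  ultimately show ?thesis using nonneg_quadratic_linear_coeff by fastforce
qed

theorem min_eigenvalue_bounds_quad_form:
  assumes fin: "finite S" and ne: "S \<noteq> {}"
    and sym: "\<And>u v. u \<in> S \<Longrightarrow> v \<in> S \<Longrightarrow> M u v = M v u"
  shows "Min (eigenvalues_on S M) * sq_norm S w \<le> quad_form S M w"
proof -
  obtain z0 where z0: "sq_norm S z0 = 1"
    and min: "\<And>y. sq_norm S y = 1 \<Longrightarrow> quad_form S M z0 \<le> quad_form S M y"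
    using sphere_minimizer[OF fin ne] by blast
  define m where "m = quad_form S M z0"
  have bound: "m * sq_norm S w \<le> quad_form S M w" for w
    using sphere_min_bound[OF fin] min unfolding m_def by blast
  have "\<exists>u\<in>S. z0 u \<noteq> 0"
  proof (rule ccontr)
    assume "\<not> ?thesis"
    then have "sq_norm S z0 = 0" unfolding sq_norm_def by simp
    then show False using z0 by simp
  qed
  moreover have "\<forall>u\<in>S. (\<Sum>v\<in>S. M u v * z0 v) = m * z0 u"
    using equality_vector_is_eigenvector[OF fin sym bound] z0 unfolding m_def by simp
  ultimately have "m \<in> eigenvalues_on S M" unfolding eigenvalues_on_def by blast
  then have "Min (eigenvalues_on S M) \<le> m" using eigenvalues_on_finite[OF fin] by simp
  moreover have "sq_norm S w \<ge> 0" unfolding sq_norm_def by (simp add: sum_nonneg)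
  ultimately show ?thesis using bound[of w] by (meson mult_right_mono order_trans)
qed

lemma quad_form_bound_on_support:
  assumes fin: "finite S" and T: "T \<subseteq> S" and z: "\<And>u. u \<notin> T \<Longrightarrow> z u = 0"
    and bound: "c * sq_norm S z \<le> quad_form S M z"
  shows "c * sq_norm T z \<le> quad_form T M z"
proof -
  have "sq_norm S z = sq_norm T z" unfolding sq_norm_def
    by (rule sum.mono_neutral_right[OF fin T]) (auto simp: z)
  moreover have "quad_form S M z = quad_form T M z"
  proof -
    have "(\<Sum>v\<in>S. z u * M u v * z v) = (\<Sum>v\<in>T. z u * M u v * z v)" for u
      by (rule sum.mono_neutral_right[OF fin T]) (auto simp: z)
    moreover have "(\<Sum>u\<in>S. \<Sum>v\<in>T. z u * M u v * z v) = (\<Sum>u\<in>T. \<Sum>v\<in>T. z u * M u v * z v)"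
      by (rule sum.mono_neutral_right[OF fin T]) (auto simp: z)
    ultimately show ?thesis unfolding quad_form_def by simp
  qed
  ultimately show ?thesis using bound by simp
qed

section \<open>Decompositions of Hoffman graphs\<close>

lemma hoffman_graphD:
  assumes "hoffman_graph V S E"
  shows "finite V" "S \<subseteq> V" "\<And>u v. E u v \<Longrightarrow> u \<in> V \<and> v \<in> V" "\<And>u v. E u v \<Longrightarrow> E v u"
    "\<And>u. \<not> E u u" "\<And>y. y \<in> V - S \<Longrightarrow> \<exists>x\<in>S. E x y"
    "\<And>y z. y \<in> V - S \<Longrightarrow> z \<in> V - S \<Longrightarrow> \<not> E y z"
  using assms unfolding hoffman_graph_def by blast+

definition fat_closure :: "'a set \<Rightarrow> 'a set \<Rightarrow> ('a \<Rightarrow> 'a \<Rightarrow> bool) \<Rightarrow> 'a set \<Rightarrow> 'a set" where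
  "fat_closure V S E T = T \<union> (\<Union>u\<in>T. fat_nbrs V S E u)"

lemma slim_part_fat_closure: "T \<subseteq> S \<Longrightarrow> S \<inter> fat_closure V S E T = T"
  unfolding fat_closure_def fat_nbrs_def by auto

text \<open>Every fat vertex of the closure keeps a slim neighbour, so the closure spans an induced
  Hoffman subgraph.\<close>
lemma induced_hoffman_subgraph_fat_closure:
  assumes hg: "hoffman_graph V S E" and T: "T \<subseteq> S"
  shows "induced_hoffman_subgraph V S E (fat_closure V S E T)"
proof -
  note h = hoffman_graphD[OF hg]
  let ?W = "fat_closure V S E T"
  let ?E = "\<lambda>u v. E u v \<and> u \<in> ?W \<and> v \<in> ?W"
  have WV: "?W \<subseteq> V" using T h(2) unfolding fat_closure_def fat_nbrs_def by auto
  have fat_has_slim: "\<exists>x\<in>S \<inter> ?W. ?E x y" if y: "y \<in> ?W - S \<inter> ?W" for y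
  proof -
    obtain u where "u \<in> T" "y \<in> fat_nbrs V S E u" using T y unfolding fat_closure_def by auto
    then show ?thesis using T y unfolding fat_closure_def fat_nbrs_def by blast
  qed
  have "hoffman_graph ?W (S \<inter> ?W) ?E"
    unfolding hoffman_graph_def
  proof (intro conjI allI impI ballI)
    show "finite ?W" using finite_subset[OF WV h(1)] .
    show "\<not> ?E y z" if "y \<in> ?W - S \<inter> ?W" "z \<in> ?W - S \<inter> ?W" for y z
      using that WV h(7) by blast
  qed (use fat_has_slim h(4,5) in auto)
  then show ?thesis using WV unfolding induced_hoffman_subgraph_def by blast
qed

text \<open>The fat closures of a set of slim vertices and of its complement cover all vertices, since
  every fat vertex has a slim neighbour.\<close>
lemma fat_closures_cover:
  assumes hg: "hoffman_graph V S E" and K: "K \<subseteq> S"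
  shows "V = fat_closure V S E K \<union> fat_closure V S E (S - K)"
proof
  show "V \<subseteq> fat_closure V S E K \<union> fat_closure V S E (S - K)"
  proof
    fix v assume v: "v \<in> V"
    show "v \<in> fat_closure V S E K \<union> fat_closure V S E (S - K)"
    proof (cases "v \<in> S")
      case False
      then obtain u where "u \<in> S" "E u v" using hoffman_graphD(6)[OF hg] v by blast
      then have "v \<in> fat_nbrs V S E u" using v False unfolding fat_nbrs_def by auto
      then show ?thesis using \<open>u \<in> S\<close> unfolding fat_closure_def by auto
    qed (auto simp: fat_closure_def)
  qed
  show "fat_closure V S E K \<union> fat_closure V S E (S - K) \<subseteq> V"
    using induced_hoffman_subgraph_fat_closure[OF hg] K
    unfolding induced_hoffman_subgraph_def by blast
qed

lemma decomposition_of_split: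
  assumes hg: "hoffman_graph V S E" and K: "K \<subseteq> S" "K \<noteq> {}" "S - K \<noteq> {}"
    and cross: "\<And>u v. u \<in> K \<Longrightarrow> v \<in> S - K \<Longrightarrow>
       card (fat_nbrs V S E u \<inter> fat_nbrs V S E v) \<le> 1 \<and>
       (card (fat_nbrs V S E u \<inter> fat_nbrs V S E v) = 1 \<longleftrightarrow> E u v)"
  shows "decomposition V S E 2 (\<lambda>i. fat_closure V S E (if i = 0 then K else S - K))"
proof -
  note h = hoffman_graphD[OF hg]
  define part where "part i = (if i = (0::nat) then K else S - K)" for i
  let ?H = "\<lambda>i. fat_closure V S E (part i)"
  have two: "{..<2::nat} = {0, 1}" by (auto simp: numeral_2_eq_2 lessThan_Suc)
  have part_sub: "part i \<subseteq> S" "part i \<noteq> {}" for i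
    using K unfolding part_def by auto
  have slim: "S \<inter> ?H i = part i" for i by (rule slim_part_fat_closure[OF part_sub(1)])
  have other: "part j = S - part i" if "i < 2" "j < 2" "i \<noteq> j" for i j
    using that K(1) unfolding part_def by (auto simp: numeral_2_eq_2 less_Suc_eq)
  have cross_sym: "card (fat_nbrs V S E x \<inter> fat_nbrs V S E y) \<le> 1 \<and>
        (card (fat_nbrs V S E x \<inter> fat_nbrs V S E y) = 1 \<longleftrightarrow> E x y)"
    if "(x \<in> K \<and> y \<in> S - K) \<or> (y \<in> K \<and> x \<in> S - K)" for x y
    using that
  proof
    assume "y \<in> K \<and> x \<in> S - K"
    then show ?thesis using cross[of y x] h(4) by (metis Int_commute)
  qed (use cross in blast)
  have parts: "\<forall>i<2. ?H i \<noteq> {} \<and> induced_hoffman_subgraph V S E (?H i)"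
    using part_sub induced_hoffman_subgraph_fat_closure[OF hg] unfolding fat_closure_def by blast
  have union: "V = (\<Union>i<2. ?H i)"
    using fat_closures_cover[OF hg K(1)] unfolding two part_def by simp
  have disjoint: "\<forall>i<2. \<forall>j<2. i \<noteq> j \<longrightarrow> S \<inter> ?H i \<inter> (S \<inter> ?H j) = {}"
  proof (intro allI impI)
    fix i j :: nat assume ij: "i < 2" "j < 2" "i \<noteq> j"
    show "S \<inter> ?H i \<inter> (S \<inter> ?H j) = {}" using slim[of i] slim[of j] other[OF ij] by blast
  qed
  have closed: "\<forall>i<2. \<forall>x\<in>S \<inter> ?H i. fat_nbrs V S E x \<subseteq> ?H i"
  proof (intro allI impI ballI)
    fix i x assume "x \<in> S \<inter> ?H i"
    then have "x \<in> part i" unfolding slim .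
    then show "fat_nbrs V S E x \<subseteq> ?H i" unfolding fat_closure_def by blast
  qed
  have crossing: "\<forall>i<2. \<forall>j<2. i \<noteq> j \<longrightarrow> (\<forall>x\<in>S \<inter> ?H i. \<forall>y\<in>S \<inter> ?H j.
      card (fat_nbrs V S E x \<inter> fat_nbrs V S E y) \<le> 1 \<and>
      (card (fat_nbrs V S E x \<inter> fat_nbrs V S E y) = 1 \<longleftrightarrow> E x y))"
  proof (intro allI impI ballI)
    fix i j :: nat and x y
    assume ij: "i < 2" "j < 2" "i \<noteq> j" and "x \<in> S \<inter> ?H i" "y \<in> S \<inter> ?H j"
    then have "x \<in> part i" "y \<in> S - part i" using slim[of i] slim[of j] other[OF ij] by blast+
    then have "(x \<in> K \<and> y \<in> S - K) \<or> (y \<in> K \<and> x \<in> S - K)"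
      unfolding part_def using K(1) by (auto split: if_splits)
    then show "card (fat_nbrs V S E x \<inter> fat_nbrs V S E y) \<le> 1 \<and>
        (card (fat_nbrs V S E x \<inter> fat_nbrs V S E y) = 1 \<longleftrightarrow> E x y)"
      by (rule cross_sym)
  qed
  show ?thesis
    unfolding decomposition_def part_def[symmetric] using parts union disjoint closed crossing by blast
qed

lemma indecomposable_no_split:
  assumes "hoffman_graph V S E" "indecomposable V S E" "K \<subseteq> S" "K \<noteq> {}"
    and "\<And>u v. u \<in> K \<Longrightarrow> v \<in> S - K \<Longrightarrow>
       card (fat_nbrs V S E u \<inter> fat_nbrs V S E v) \<le> 1 \<and>
       (card (fat_nbrs V S E u \<inter> fat_nbrs V S E v) = 1 \<longleftrightarrow> E u v)"
  shows "K = S"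
  using decomposition_of_split[OF assms(1,3,4)] assms(2,3,5) unfolding indecomposable_def by blast

lemma signed_iso_singleton:
  assumes "l x x = None"
  shows "signed_iso {x} l Q001_V Q001_l"
  unfolding signed_iso_def Q001_V_def Q001_l_def using assms
  by (intro exI[of _ "\<lambda>_. 0"]) (auto simp: bij_betw_def)

lemma signed_iso_pair:
  assumes "x \<noteq> y" "l x y = s" "l y x = s" "l x x = None" "l y y = None"
  shows "signed_iso {x, y} l {0, 1::nat} (\<lambda>u v. if u \<noteq> v then s else None)"
proof -
  define f where "f u = (if u = x then 0 else 1::nat)" for u
  have "bij_betw f {x, y} {0, 1}" unfolding f_def bij_betw_def using assms(1) by auto
  moreover have "\<forall>u\<in>{x, y}. \<forall>v\<in>{x, y}. l u v = (if f u \<noteq> f v then s else None)"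
    using assms unfolding f_def by auto
  ultimately show ?thesis unfolding signed_iso_def by blast
qed

lemma Bmat_sym:
  assumes "hoffman_graph V S E"
  shows "Bmat V S E v u = Bmat V S E u v"
proof -
  have "E v u \<longleftrightarrow> E u v" using hoffman_graphD(4)[OF assms] by blast
  then show ?thesis unfolding Bmat_def by (simp add: Int_commute)
qed

lemma lambda_min_bounds_quad_form:
  assumes hg: "hoffman_graph V S E" and ne: "S \<noteq> {}"
  shows "lambda_min V S E * sq_norm S z \<le> quad_form S (Bmat V S E) z"
proof -
  have "finite S" using hoffman_graphD(1,2)[OF hg] finite_subset by blast
  moreover have "lambda_min V S E = Min (eigenvalues_on S (Bmat V S E))"
    unfolding lambda_min_def B_eigenvalues_def eigenvalues_on_def ..
  moreover have "Bmat V S E u v = Bmat V S E v u" for u v by (rule Bmat_sym[OF hg])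
  ultimately show ?thesis using min_eigenvalue_bounds_quad_form[OF _ ne] by simp
qed

lemma golden_bound: "-8/3 < -1 - (1 + sqrt 5) / (2::real)"
proof -
  have "sqrt 5 < sqrt ((7/3::real)^2)" by (rule real_sqrt_less_mono) (simp add: power2_eq_square)
  then have "sqrt 5 < 7/3" by simp
  then show ?thesis by (simp add: field_simps)
qed

section \<open>Fat Hoffman graphs whose matrix B has smallest eigenvalue greater than -8/3\<close>

text \<open>Throughout, c > -8/3 bounds the quadratic form of B from below; the bound is only ever
  tested on vectors supported on at most three slim vertices.\<close>
locale fat_hoffman_bounded =
  fixes V S :: "'a set" and E :: "'a \<Rightarrow> 'a \<Rightarrow> bool" and c :: real
  assumes hoffman: "hoffman_graph V S E" and fat: "fat_hoffman V S E"
    and c_gt: "c > -8/3"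
    and form_bound: "\<And>z. c * sq_norm S z \<le> quad_form S (Bmat V S E) z"
begin

abbreviation F :: "'a \<Rightarrow> 'a set" where "F \<equiv> fat_nbrs V S E"
abbreviation B :: "'a \<Rightarrow> 'a \<Rightarrow> real" where "B \<equiv> Bmat V S E"

lemma finite_S: "finite S"
  using hoffman_graphD(1,2)[OF hoffman] finite_subset by blast

lemma finite_F: "finite (F u)"
  using hoffman_graphD(1)[OF hoffman] unfolding fat_nbrs_def by simp

lemma B_entry: "B u v = (if E u v then 1 else 0) - real (card (F u \<inter> F v))"
  unfolding Bmat_def ..

lemma B_diag: "B u u = - real (card (F u))"
  using hoffman_graphD(5)[OF hoffman] unfolding Bmat_def by simp

lemma test_one:
  assumes "u \<in> S"
  shows "c \<le> B u u"
  using quad_form_bound_on_support[OF finite_S _ _ form_bound, of "{u}" "\<lambda>w. if w = u then 1 else 0"]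
    assms by (simp add: quad_form_def sq_norm_def)

lemma test_two:
  assumes "u \<in> S" "v \<in> S" "u \<noteq> v"
  shows "c * (a^2 + b^2) \<le> a^2 * B u u + b^2 * B v v + 2 * a * b * B u v"
  using quad_form_bound_on_support[OF finite_S _ _ form_bound,
      of "{u, v}" "\<lambda>w. if w = u then a else if w = v then b else 0"]
    assms Bmat_sym[OF hoffman, of u v]
  by (simp add: quad_form_def sq_norm_def algebra_simps power2_eq_square)

lemma test_three:
  assumes "u \<in> S" "v \<in> S" "w \<in> S" "u \<noteq> v" "u \<noteq> w" "v \<noteq> w"
  shows "c * (a^2 + b^2 + d^2) \<le> a^2 * B u u + b^2 * B v v + d^2 * B w w
     + 2 * a * b * B u v + 2 * a * d * B u w + 2 * b * d * B v w"
  using quad_form_bound_on_support[OF finite_S _ _ form_bound,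
      of "{u, v, w}" "\<lambda>x. if x = u then a else if x = v then b else if x = w then d else 0"]
    assms Bmat_sym[OF hoffman, of u v] Bmat_sym[OF hoffman, of u w] Bmat_sym[OF hoffman, of v w]
  by (simp add: quad_form_def sq_norm_def algebra_simps power2_eq_square)

text \<open>Every slim vertex has one (fatness) or two (B u u >= c > -3) fat neighbours.\<close>
lemma fat_degree:
  assumes "u \<in> S"
  shows "1 \<le> card (F u)" "card (F u) \<le> 2"
proof -
  show "1 \<le> card (F u)"
    using fat assms finite_F unfolding fat_hoffman_def by (simp add: Suc_le_eq card_gt_0_iff)
  show "card (F u) \<le> 2" using test_one[OF assms] B_diag[of u] c_gt by simp
qed

text \<open>Two distinct slim vertices share at most one fat neighbour: otherwise both would have
  the same two fat neighbours, and the vector (1,1) on them violates the bound.\<close>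
lemma common_fat_le_1:
  assumes "u \<in> S" "v \<in> S" "u \<noteq> v"
  shows "card (F u \<inter> F v) \<le> 1"
proof (rule ccontr)
  assume "\<not> ?thesis"
  moreover have "card (F u \<inter> F v) \<le> card (F u)" "card (F u \<inter> F v) \<le> card (F v)"
    using finite_F by (auto intro: card_mono)
  ultimately have "card (F u \<inter> F v) = 2" "card (F u) = 2" "card (F v) = 2"
    using fat_degree assms by force+
  then show False
    using test_two[OF assms, of 1 1] B_diag[of u] B_diag[of v] B_entry[of u v] c_gt
    by (cases "E u v") simp_all
qed

lemma B_offdiag_values:
  assumes "u \<in> S" "v \<in> S" "u \<noteq> v"
  shows "B u v = -1 \<or> B u v = 0 \<or> B u v = 1"
  using common_fat_le_1[OF assms] B_entry[of u v] by (cases "card (F u \<inter> F v)") auto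

lemma B_zero_between_degree_two:
  assumes "u \<in> S" "v \<in> S" "u \<noteq> v" "card (F u) = 2" "card (F v) = 2"
  shows "B u v = 0"
proof (rule ccontr)
  assume "B u v \<noteq> 0"
  then have "(B u v)^2 = 1" using B_offdiag_values[OF assms(1-3)] by auto
  then show False
    using test_two[OF assms(1-3), of 1 "- B u v"] B_diag[of u] B_diag[of v] assms(4,5) c_gt
    by (simp add: power2_eq_square algebra_simps)
qed

lemma special_label_B:
  assumes "u \<in> S" "v \<in> S" "u \<noteq> v"
  shows "special_label V S E u v =
           (if B u v = 1 then Some Plus else if B u v = -1 then Some Minus else None)"
proof -
  have "card (F u \<inter> F v) = 0 \<or> card (F u \<inter> F v) = 1" using common_fat_le_1[OF assms] by auto
  moreover have "F u \<inter> F v = {} \<longleftrightarrow> card (F u \<inter> F v) = 0" using finite_F by simp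
  ultimately show ?thesis unfolding special_label_def B_entry using assms(3) by auto
qed

lemma cross_condition_of_B_zero:
  assumes "u \<in> S" "v \<in> S" "u \<noteq> v" "B u v = 0"
  shows "card (F u \<inter> F v) \<le> 1 \<and> (card (F u \<inter> F v) = 1 \<longleftrightarrow> E u v)"
  using common_fat_le_1[OF assms(1-3)] assms(4) B_entry[of u v] by (cases "E u v") auto

definition B_nbrs :: "'a \<Rightarrow> 'a set" where
  "B_nbrs x = {y \<in> S. y \<noteq> x \<and> B x y \<noteq> 0}"

lemma B_nbr_facts:
  assumes x: "x \<in> S" "card (F x) = 2" and y: "y \<in> B_nbrs x"
  shows "y \<in> S" "y \<noteq> x" "card (F y) = 1" "B x y = 1 \<or> B x y = -1"
proof -
  show yS: "y \<in> S" "y \<noteq> x" using y unfolding B_nbrs_def by auto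
  show "card (F y) = 1"
    using y fat_degree[OF yS(1)] B_zero_between_degree_two[OF x(1) yS(1) yS(2)[symmetric] x(2)]
    unfolding B_nbrs_def by force
  show "B x y = 1 \<or> B x y = -1"
    using y B_offdiag_values[OF x(1) yS(1) yS(2)[symmetric]] unfolding B_nbrs_def by auto
qed

text \<open>x has at most one B-neighbour: for two of them y, w the vector (4, -2 B x y, -2 B x w) on
  x, y, w has Rayleigh quotient at most -64/24 = -8/3.\<close>
lemma B_nbrs_at_most_one:
  assumes x: "x \<in> S" "card (F x) = 2" and y: "y \<in> B_nbrs x" and w: "w \<in> B_nbrs x"
  shows "y = w"
proof (rule ccontr)
  assume yw: "y \<noteq> w"
  note Y = B_nbr_facts[OF x y] and W = B_nbr_facts[OF x w]
  have "B y w = -1 \<or> B y w = 0 \<or> B y w = 1" by (rule B_offdiag_values[OF Y(1) W(1) yw])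
  moreover have "B x x = -2" "B y y = -1" "B w w = -1" using B_diag x(2) Y(3) W(3) by simp_all
  ultimately show False
    using test_three[OF x(1) Y(1) W(1) Y(2)[symmetric] W(2)[symmetric] yw,
        of 4 "-2 * B x y" "-2 * B x w"] Y(4) W(4) c_gt
    by (auto simp: power2_eq_square)
qed

text \<open>A B-neighbour y of x is not B-adjacent to any w not B-adjacent to x: the vector (4, -3 B x y, 2 B x y B y w)
  on x, y, w has Rayleigh quotient at most -81/29 < -8/3.\<close>
lemma B_nbr_no_further_nbrs:
  assumes x: "x \<in> S" "card (F x) = 2" and y: "y \<in> B_nbrs x"
    and w: "w \<in> S" "w \<noteq> x" "w \<noteq> y" "B x w = 0"
  shows "B y w = 0"
proof (rule ccontr)
  assume "B y w \<noteq> 0"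
  note Y = B_nbr_facts[OF x y]
  have "B y w = -1 \<or> B y w = 1" using B_offdiag_values[OF Y(1) w(1) w(3)[symmetric]] \<open>B y w \<noteq> 0\<close>
    by auto
  moreover have "B x x = -2" "B y y = -1" "B w w = -1 \<or> B w w = -2"
    using B_diag x(2) Y(3) fat_degree[OF w(1)] by force+
  ultimately show False
    using test_three[OF x(1) Y(1) w(1) Y(2)[symmetric] w(2)[symmetric] w(3)[symmetric],
        of 4 "-3 * B x y" "2 * B x y * B y w"] Y(4) w(4) c_gt
    by (auto simp: power2_eq_square)
qed

text \<open>Hence x together with its B-neighbours is not B-adjacent to the remaining slim vertices,
  and indecomposability forces it to be everything.\<close>
lemma slim_vertices_B_closed_nbhd:
  assumes ind: "indecomposable V S E" and x: "x \<in> S" "card (F x) = 2"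
  shows "S = insert x (B_nbrs x)"
proof (rule indecomposable_no_split[OF hoffman ind, symmetric])
  show "insert x (B_nbrs x) \<subseteq> S" "insert x (B_nbrs x) \<noteq> {}"
    using x unfolding B_nbrs_def by auto
next
  fix u v assume u: "u \<in> insert x (B_nbrs x)" and v: "v \<in> S - insert x (B_nbrs x)"
  then have v': "v \<in> S" "v \<noteq> x" "B x v = 0" unfolding B_nbrs_def by auto
  have u': "u \<in> S" "u \<noteq> v" using u v x unfolding B_nbrs_def by auto
  have "B u v = 0"
  proof (cases "u = x")
    case False
    then have "u \<in> B_nbrs x" using u by simp
    then show ?thesis using B_nbr_no_further_nbrs[OF x _ v'(1,2) _ v'(3)] u'(2) by blast
  qed (use v'(3) in simp)
  then show "card (F u \<inter> F v) \<le> 1 \<and> (card (F u \<inter> F v) = 1 \<longleftrightarrow> E u v)"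
    by (rule cross_condition_of_B_zero[OF u' (1) v'(1) u'(2)])
qed

theorem special_graph_classification:
  assumes ind: "indecomposable V S E" and x: "x \<in> S" "2 \<le> card (F x)"
  shows "(signed_iso S (special_label V S E) Q001_V Q001_l \<or>
          signed_iso S (special_label V S E) Q101_V Q101_l \<or>
          signed_iso S (special_label V S E) Q011_V Q011_l) \<and> card S \<le> 2"
proof -
  have x2: "card (F x) = 2" using x fat_degree(2)[OF x(1)] by simp
  have S: "S = insert x (B_nbrs x)" by (rule slim_vertices_B_closed_nbhd[OF ind x(1) x2])
  have diag: "special_label V S E u u = None" for u unfolding special_label_def by simp
  show ?thesis
  proof (cases "B_nbrs x = {}")
    case True
    then have S1: "S = {x}" using S by simp
    show ?thesis using signed_iso_singleton[of "special_label V S E", OF diag] S1 by simp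
  next
    case False
    then obtain y where y: "y \<in> B_nbrs x" by auto
    then have "B_nbrs x = {y}" using B_nbrs_at_most_one[OF x(1) x2 y] by blast
    then have S2: "S = {x, y}" using S by simp
    note Y = B_nbr_facts[OF x(1) x2 y]
    have "special_label V S E y x = special_label V S E x y"
      using special_label_B[OF x(1) Y(1) Y(2)[symmetric]] special_label_B[OF Y(1) x(1) Y(2)]
        Bmat_sym[OF hoffman, of x y] by simp
    then have iso: "signed_iso S (special_label V S E) {0, 1::nat}
        (\<lambda>u v. if u \<noteq> v then Some s else None)"
      if "special_label V S E x y = Some s" for s
      using signed_iso_pair[of x y "special_label V S E", OF Y(2)[symmetric] that _ diag diag] that S2
      by simp
    have "special_label V S E x y = Some Plus \<or> special_label V S E x y = Some Minus"
      using special_label_B[OF x(1) Y(1) Y(2)[symmetric]] Y(4) by auto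
    then have "signed_iso S (special_label V S E) Q101_V Q101_l \<or>
        signed_iso S (special_label V S E) Q011_V Q011_l"
      unfolding Q101_V_def Q101_l_def Q011_V_def Q011_l_def using iso by blast
    moreover have "card S \<le> 2" using S2 by (simp add: card_insert_if)
    ultimately show ?thesis by blast
  qed
qed

end

theorem mainTheorem10:
  fixes V S :: "'a set" and E :: "'a \<Rightarrow> 'a \<Rightarrow> bool"
  assumes "hoffman_graph V S E"
    and "fat_hoffman V S E"
    and "indecomposable V S E"
    and "lambda_min V S E \<ge> -1 - (1 + sqrt 5) / 2"
    and "\<exists>x\<in>S. card (fat_nbrs V S E x) \<ge> 2"
  shows "(signed_iso S (special_label V S E) Q001_V Q001_l \<or>
          signed_iso S (special_label V S E) Q101_V Q101_l \<or>
          signed_iso S (special_label V S E) Q011_V Q011_l) \<and> card S \<le> 2"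
proof -
  obtain x where x: "x \<in> S" "card (fat_nbrs V S E x) \<ge> 2" using assms(5) by blast
  have form: "(-1 - (1 + sqrt 5) / 2) * sq_norm S z \<le> quad_form S (Bmat V S E) z" for z
  proof -
    have "sq_norm S z \<ge> 0" unfolding sq_norm_def by (simp add: sum_nonneg)
    then have "(-1 - (1 + sqrt 5) / 2) * sq_norm S z \<le> lambda_min V S E * sq_norm S z"
      by (rule mult_right_mono[OF assms(4)])
    also have "\<dots> \<le> quad_form S (Bmat V S E) z"
      using lambda_min_bounds_quad_form[OF assms(1)] x(1) by blast
    finally show ?thesis .
  qed
  interpret fat_hoffman_bounded V S E "-1 - (1 + sqrt 5) / 2"
    by (rule fat_hoffman_bounded.intro[OF assms(1,2) golden_bound form])
  show ?thesis by (rule special_graph_classification[OF assms(3) x])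
qed

end
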